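(* Let $p:C\to G$ be a normal covering of a connected graph $G$ with deck transformation group $\mathcal{D}$, let $\mathcal{T}=(T,(V_t)_{t\in T})$ be a regular $\mathcal{D}$-canonical tree-decomposition of $C$, and let $\mathcal{H}=(H,(G_h)_{h\in H})$ be defined from $\mathcal{T}$ via $p$ as in the context. Then $\mathcal{H}$ is an honest graph-decomposition of $G$.
   Context: Graphs may have loops and parallel edges and are viewed as 1-complexes; covering spaces are connected. A tree-decomposition $(T,(V_t))$ of $C$ ($T$ a tree, $V_t\subseteq V(C)$ non-empty) satisfies $C=\bigcup_tC[V_t]$ and $\{t:v\in V_t\}$ induces a connected subtree for every vertex $v$. Each edge $t_1t_2$ of $T$ induces the separation $\{\bigcup_{s\in T_1}V_s,\bigcup_{s\in T_2}V_s\}$ ($T_i$ the component of $T-t_1t_2$ containing $t_i$); the decomposition is regular if no such separation has a side equal to $V(C)$. It is $\mathcal{D}$-canonical if there is a group homomorphism $\varphi\mapsto(\varphi,\psi_\varphi)$ from $\mathcal{D}$ to pairs with $\psi_\varphi$ an automorphism of $T$ and $\varphi(V_t)=V_{\psi_\varphi(t)}$ for all $t$; for regular decompositions $\psi_\varphi$ is unique, giving an action of $\mathcal{D}$ on $T$. Construction: $H=T/\mathcal{D}$ is the orbit graph (vertices the $\mathcal{D}$-orbits of nodes, edges the orbits of edges, the orbit of an edge joining the orbits of its endpoints), and $G_h=p(C[V_t])$ for any $t\in h$ (independent of choice). A graph-decomposition of $G$ is a pair $(H,(G_h))$ with subgraphs $G_h\subseteq G$, $G=\bigcup_hG_h$,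 and $H[\{h:v\in G_h\}]$ connected for each vertex $v$; it is honest if $G_h\cap G_{h'}\neq\emptyset$ for every edge $hh'$ of $H$. *)

theory Defs
  imports Main
begin

text \<open>A graph is given by vertices, darts (= oriented edges / half-edge pairs),
  the tail of each dart and the fixed-point-free involution reversing a dart.
  An edge is a pair {d, rev d}; a loop is an edge with tail d = head d.\<close>

record ('v,'d) dgraph =
  gverts :: "'v set"
  gdarts :: "'d set"
  gtail  :: "'d \<Rightarrow> 'v"
  grev   :: "'d \<Rightarrow> 'd"

definition ghead :: "('v,'d) dgraph \<Rightarrow> 'd \<Rightarrow> 'v" where
  "ghead G d = gtail G (grev G d)"

definition wf_graph :: "('v,'d) dgraph \<Rightarrow> bool" where
  "wf_graph G \<longleftrightarrow> (\<forall>d\<in>gdarts G. gtail G d \<in> gverts G \<and> grev G d \<in> gdarts G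
      \<and> grev G (grev G d) = d \<and> grev G d \<noteq> d)"

definition gadj :: "('v,'d) dgraph \<Rightarrow> ('v \<times> 'v) set" where
  "gadj G = {(gtail G d, ghead G d) | d. d \<in> gdarts G}"

definition gconnected :: "('v,'d) dgraph \<Rightarrow> bool" where
  "gconnected G \<longleftrightarrow> gverts G \<noteq> {} \<and>
     (\<forall>u\<in>gverts G. \<forall>v\<in>gverts G. (u, v) \<in> (gadj G)\<^sup>*)"

definition induced :: "('v,'d) dgraph \<Rightarrow> 'v set \<Rightarrow> ('v,'d) dgraph" where
  "induced G X = \<lparr> gverts = X,
      gdarts = {d \<in> gdarts G. gtail G d \<in> X \<and> ghead G d \<in> X},
      gtail = gtail G, grev = grev G \<rparr>"

definition subgraph :: "('v,'d) dgraph \<Rightarrow> ('v,'d) dgraph \<Rightarrow> bool" where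
  "subgraph S G \<longleftrightarrow> wf_graph S \<and> gverts S \<subseteq> gverts G \<and> gdarts S \<subseteq> gdarts G
      \<and> gtail S = gtail G \<and> grev S = grev G"

definition del_edge :: "('v,'d) dgraph \<Rightarrow> 'd \<Rightarrow> ('v,'d) dgraph" where
  "del_edge G d = G\<lparr> gdarts := gdarts G - {d, grev G d} \<rparr>"

text \<open>A cycle: a nonempty cyclic sequence of darts, consecutive ones meeting,
  with pairwise distinct vertices and pairwise distinct edges
  (length 1 = loop, length 2 = pair of parallel edges).\<close>
definition is_cycle :: "('v,'d) dgraph \<Rightarrow> 'd list \<Rightarrow> bool" where
  "is_cycle G ds \<longleftrightarrow> ds \<noteq> [] \<and> set ds \<subseteq> gdarts G
     \<and> (\<forall>i < length ds. ghead G (ds ! i) = gtail G (ds ! ((i + 1) mod length ds)))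
     \<and> distinct (map (gtail G) ds)
     \<and> (\<forall>i < length ds. \<forall>j < length ds. i \<noteq> j \<longrightarrow>
            ds ! j \<noteq> ds ! i \<and> ds ! j \<noteq> grev G (ds ! i))"

definition is_tree :: "('v,'d) dgraph \<Rightarrow> bool" where
  "is_tree T \<longleftrightarrow> wf_graph T \<and> gconnected T \<and> (\<nexists>ds. is_cycle T ds)"

text \<open>Automorphisms, represented as a pair (vertex map, dart map); normalised to be
  the identity outside the graph so that automorphisms are uniquely represented.\<close>
definition is_aut :: "('v,'d) dgraph \<Rightarrow> ('v \<Rightarrow> 'v) \<times> ('d \<Rightarrow> 'd) \<Rightarrow> bool" where
  "is_aut G \<phi> \<longleftrightarrow> bij_betw (fst \<phi>) (gverts G) (gverts G)
     \<and> bij_betw (snd \<phi>) (gdarts G) (gdarts G)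
     \<and> (\<forall>d\<in>gdarts G. fst \<phi> (gtail G d) = gtail G (snd \<phi> d)
                     \<and> snd \<phi> (grev G d) = grev G (snd \<phi> d))
     \<and> (\<forall>v. v \<notin> gverts G \<longrightarrow> fst \<phi> v = v)
     \<and> (\<forall>d. d \<notin> gdarts G \<longrightarrow> snd \<phi> d = d)"

definition comp_pair :: "('a \<Rightarrow> 'a) \<times> ('b \<Rightarrow> 'b) \<Rightarrow> ('a \<Rightarrow> 'a) \<times> ('b \<Rightarrow> 'b)
                          \<Rightarrow> ('a \<Rightarrow> 'a) \<times> ('b \<Rightarrow> 'b)" where
  "comp_pair \<phi> \<chi> = (fst \<phi> \<circ> fst \<chi>, snd \<phi> \<circ> snd \<chi>)"

definition is_covering :: "('v,'d) dgraph \<Rightarrow> ('w,'e) dgraph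
                          \<Rightarrow> ('v \<Rightarrow> 'w) \<times> ('d \<Rightarrow> 'e) \<Rightarrow> bool" where
  "is_covering C G p \<longleftrightarrow> wf_graph C \<and> wf_graph G \<and> gconnected C
     \<and> fst p ` gverts C = gverts G
     \<and> (\<forall>d\<in>gdarts C. snd p d \<in> gdarts G
            \<and> fst p (gtail C d) = gtail G (snd p d)
            \<and> snd p (grev C d) = grev G (snd p d))
     \<and> (\<forall>x\<in>gverts C. bij_betw (snd p) {d \<in> gdarts C. gtail C d = x}
                                       {e \<in> gdarts G. gtail G e = fst p x})"

definition deck :: "('v,'d) dgraph \<Rightarrow> ('v \<Rightarrow> 'w) \<times> ('d \<Rightarrow> 'e)
                    \<Rightarrow> (('v \<Rightarrow> 'v) \<times> ('d \<Rightarrow> 'd)) set" where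
  "deck C p = {\<phi>. is_aut C \<phi>
      \<and> (\<forall>v\<in>gverts C. fst p (fst \<phi> v) = fst p v)
      \<and> (\<forall>d\<in>gdarts C. snd p (snd \<phi> d) = snd p d)}"

definition is_normal_covering :: "('v,'d) dgraph \<Rightarrow> ('w,'e) dgraph
                          \<Rightarrow> ('v \<Rightarrow> 'w) \<times> ('d \<Rightarrow> 'e) \<Rightarrow> bool" where
  "is_normal_covering C G p \<longleftrightarrow> is_covering C G p
     \<and> (\<forall>x\<in>gverts C. \<forall>y\<in>gverts C. fst p x = fst p y \<longrightarrow> (\<exists>\<phi>\<in>deck C p. fst \<phi> x = y))"

definition tree_decomposition :: "('v,'d) dgraph \<Rightarrow> ('t,'a) dgraph \<Rightarrow> ('t \<Rightarrow> 'v set) \<Rightarrow> bool" where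
  "tree_decomposition C T V \<longleftrightarrow> is_tree T
     \<and> (\<forall>t\<in>gverts T. V t \<noteq> {} \<and> V t \<subseteq> gverts C)
     \<and> gverts C = (\<Union>t\<in>gverts T. V t)
     \<and> gdarts C = (\<Union>t\<in>gverts T. gdarts (induced C (V t)))
     \<and> (\<forall>v\<in>gverts C. gconnected (induced T {t \<in> gverts T. v \<in> V t}))"

text \<open>For a dart d of T from t1 to t2, the side of the induced separation belonging
  to t1: the union of the bags of the component of T - t1t2 containing t1.\<close>
definition sep_side :: "('t,'a) dgraph \<Rightarrow> ('t \<Rightarrow> 'v set) \<Rightarrow> 'a \<Rightarrow> 'v set" where
  "sep_side T V d = (\<Union>{V s | s. s \<in> gverts T \<and> (gtail T d, s) \<in> (gadj (del_edge T d))\<^sup>*})"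

definition regular_td :: "('v,'d) dgraph \<Rightarrow> ('t,'a) dgraph \<Rightarrow> ('t \<Rightarrow> 'v set) \<Rightarrow> bool" where
  "regular_td C T V \<longleftrightarrow> (\<forall>d\<in>gdarts T. sep_side T V d \<noteq> gverts C)"

definition canonical_via :: "('v,'d) dgraph \<Rightarrow> ('t,'a) dgraph \<Rightarrow> ('t \<Rightarrow> 'v set)
    \<Rightarrow> (('v \<Rightarrow> 'v) \<times> ('d \<Rightarrow> 'd)) set
    \<Rightarrow> (('v \<Rightarrow> 'v) \<times> ('d \<Rightarrow> 'd) \<Rightarrow> ('t \<Rightarrow> 't) \<times> ('a \<Rightarrow> 'a)) \<Rightarrow> bool" where
  "canonical_via C T V Dk \<psi> \<longleftrightarrow>
     (\<forall>\<phi>\<in>Dk. is_aut T (\<psi> \<phi>) \<and> (\<forall>t\<in>gverts T. fst \<phi> ` V t = V (fst (\<psi> \<phi>) t)))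
   \<and> (\<forall>\<phi>\<in>Dk. \<forall>\<chi>\<in>Dk. \<psi> (comp_pair \<phi> \<chi>) = comp_pair (\<psi> \<phi>) (\<psi> \<chi>))"

definition is_canonical :: "('v,'d) dgraph \<Rightarrow> ('t,'a) dgraph \<Rightarrow> ('t \<Rightarrow> 'v set)
    \<Rightarrow> (('v \<Rightarrow> 'v) \<times> ('d \<Rightarrow> 'd)) set \<Rightarrow> bool" where
  "is_canonical C T V Dk \<longleftrightarrow> (\<exists>\<psi>. canonical_via C T V Dk \<psi>)"

text \<open>H is a multigraph given by vertices, edges and the (1- or 2-element) set of
  ends of each edge; a loop has one end.\<close>
record ('h,'f) ugraph =
  uverts :: "'h set"
  uedges :: "'f set"
  uends  :: "'f \<Rightarrow> 'h set"

definition uconnected_on :: "('h,'f) ugraph \<Rightarrow> 'h set \<Rightarrow> bool" where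
  "uconnected_on H X \<longleftrightarrow> X \<noteq> {} \<and> X \<subseteq> uverts H \<and>
     (\<forall>x\<in>X. \<forall>y\<in>X. (x, y) \<in>
        {(a, b). a \<in> X \<and> b \<in> X \<and> (\<exists>f\<in>uedges H. uends H f = {a, b})}\<^sup>*)"

definition graph_decomposition :: "('w,'e) dgraph \<Rightarrow> ('h,'f) ugraph
     \<Rightarrow> ('h \<Rightarrow> ('w,'e) dgraph) \<Rightarrow> bool" where
  "graph_decomposition G H Gh \<longleftrightarrow>
     (\<forall>h\<in>uverts H. subgraph (Gh h) G)
   \<and> gverts G = (\<Union>h\<in>uverts H. gverts (Gh h))
   \<and> gdarts G = (\<Union>h\<in>uverts H. gdarts (Gh h))
   \<and> (\<forall>v\<in>gverts G. uconnected_on H {h \<in> uverts H. v \<in> gverts (Gh h)})"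

definition honest :: "('w,'e) dgraph \<Rightarrow> ('h,'f) ugraph
     \<Rightarrow> ('h \<Rightarrow> ('w,'e) dgraph) \<Rightarrow> bool" where
  "honest G H Gh \<longleftrightarrow> graph_decomposition G H Gh
     \<and> (\<forall>f\<in>uedges H. \<forall>h h'. uends H f = {h, h'} \<longrightarrow> gverts (Gh h) \<inter> gverts (Gh h') \<noteq> {})"

definition node_orbit :: "(('v \<Rightarrow> 'v) \<times> ('d \<Rightarrow> 'd)) set
    \<Rightarrow> (('v \<Rightarrow> 'v) \<times> ('d \<Rightarrow> 'd) \<Rightarrow> ('t \<Rightarrow> 't) \<times> ('a \<Rightarrow> 'a)) \<Rightarrow> 't \<Rightarrow> 't set" where
  "node_orbit Dk \<psi> t = {fst (\<psi> \<phi>) t | \<phi>. \<phi> \<in> Dk}"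

text \<open>Edges of T are the sets {d, rev d}; edges of H are their orbits.\<close>
definition orbit_graph :: "('t,'a) dgraph \<Rightarrow> (('v \<Rightarrow> 'v) \<times> ('d \<Rightarrow> 'd)) set
    \<Rightarrow> (('v \<Rightarrow> 'v) \<times> ('d \<Rightarrow> 'd) \<Rightarrow> ('t \<Rightarrow> 't) \<times> ('a \<Rightarrow> 'a))
    \<Rightarrow> ('t set, 'a set set) ugraph" where
  "orbit_graph T Dk \<psi> = \<lparr>
     uverts = {node_orbit Dk \<psi> t | t. t \<in> gverts T},
     uedges = {{snd (\<psi> \<phi>) ` {d, grev T d} | \<phi>. \<phi> \<in> Dk} | d. d \<in> gdarts T},
     uends = (\<lambda>E. {node_orbit Dk \<psi> (gtail T d) | d. d \<in> \<Union>E}) \<rparr>"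

definition image_graph :: "('w,'e) dgraph \<Rightarrow> ('v \<Rightarrow> 'w) \<times> ('d \<Rightarrow> 'e)
    \<Rightarrow> ('v,'d) dgraph \<Rightarrow> ('w,'e) dgraph" where
  "image_graph G p S = \<lparr> gverts = fst p ` gverts S, gdarts = snd p ` gdarts S,
       gtail = gtail G, grev = grev G \<rparr>"

text \<open>G_h = p(C[V_t]) for (a chosen) t in h.\<close>
definition projected_parts :: "('v,'d) dgraph \<Rightarrow> ('w,'e) dgraph
    \<Rightarrow> ('v \<Rightarrow> 'w) \<times> ('d \<Rightarrow> 'e) \<Rightarrow> ('t,'a) dgraph \<Rightarrow> ('t \<Rightarrow> 'v set)
    \<Rightarrow> 't set \<Rightarrow> ('w,'e) dgraph" where
  "projected_parts C G p T V h =
     image_graph G p (induced C (V (SOME t. t \<in> h \<and> t \<in> gverts T)))"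

end

(* The deck group D acts on T, so H = T/D is an orbit graph, and the parts
   G_h = p(C[V_t]) do not depend on the choice of t in h because deck transformations
   commute with p. Every vertex and every edge of G lifts to C and hence into a bag, so
   the parts cover G. If two parts contain a vertex v of G, they come from bags containing
   lifts x1 and x2 of v; normality moves x1 onto x2 by a deck transformation, and the
   nodes of T whose bags contain x2 form a subtree, whose image in H is connected.
   Honesty comes from regularity: if the bags at the ends of an edge of T were disjoint,
   the component of T minus that edge containing one end would contain, with each bag,
   every bag meeting it, so by the connectedness of C its side of the separation would
   be all of V(C). *)

theory Submission
  imports Defs "HOL-Combinatorics.Permutations"
begin

section \<open>Automorphisms and deck transformations\<close>

lemma is_aut_iff_permutes:
  "is_aut G \<phi> \<longleftrightarrow> fst \<phi> permutes gverts G \<and> snd \<phi> permutes gdarts G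
     \<and> (\<forall>d\<in>gdarts G. fst \<phi> (gtail G d) = gtail G (snd \<phi> d)
                     \<and> snd \<phi> (grev G d) = grev G (snd \<phi> d))"
  unfolding is_aut_def permutes_altdef by blast

lemma
  assumes "is_aut G \<phi>"
  shows is_aut_vert: "v \<in> gverts G \<Longrightarrow> fst \<phi> v \<in> gverts G"
    and is_aut_dart: "d \<in> gdarts G \<Longrightarrow> snd \<phi> d \<in> gdarts G"
    and is_aut_tail: "d \<in> gdarts G \<Longrightarrow> fst \<phi> (gtail G d) = gtail G (snd \<phi> d)"
    and is_aut_rev: "d \<in> gdarts G \<Longrightarrow> snd \<phi> (grev G d) = grev G (snd \<phi> d)"
  using assms unfolding is_aut_def bij_betw_def by auto

lemma is_aut_head:
  assumes "is_aut G \<phi>" "wf_graph G" "d \<in> gdarts G"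
  shows "fst \<phi> (ghead G d) = ghead G (snd \<phi> d)"
  using assms is_aut_tail is_aut_rev unfolding ghead_def wf_graph_def by metis

lemma is_aut_comp:
  assumes "is_aut G \<phi>" "is_aut G \<chi>"
  shows "is_aut G (comp_pair \<phi> \<chi>)"
  using assms unfolding is_aut_iff_permutes comp_pair_def
  by (auto intro: permutes_compose simp: permutes_in_image)

lemma is_aut_inverse:
  assumes "is_aut G \<phi>"
  defines "\<phi>' \<equiv> (inv (fst \<phi>), inv (snd \<phi>))"
  shows "is_aut G \<phi>'" "comp_pair \<phi>' \<phi> = (id, id)" "comp_pair \<phi> \<phi>' = (id, id)"
proof -
  have f: "fst \<phi> permutes gverts G" and g: "snd \<phi> permutes gdarts G"
    using assms(1) unfolding is_aut_iff_permutes by auto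
  show "comp_pair \<phi>' \<phi> = (id, id)" "comp_pair \<phi> \<phi>' = (id, id)"
    unfolding comp_pair_def \<phi>'_def using permutes_inv_o[OF f] permutes_inv_o[OF g] by simp_all
  have "fst \<phi>' (gtail G d) = gtail G (snd \<phi>' d) \<and> snd \<phi>' (grev G d) = grev G (snd \<phi>' d)"
    if d: "d \<in> gdarts G" for d
  proof -
    have "inv (snd \<phi>) d \<in> gdarts G" using permutes_in_image[OF permutes_inv[OF g]] d by simp
    then have "fst \<phi> (gtail G (inv (snd \<phi>) d)) = gtail G d \<and>
               snd \<phi> (grev G (inv (snd \<phi>) d)) = grev G d"
      using assms(1) is_aut_tail is_aut_rev permutes_inverses(1)[OF g] by metis
    then show ?thesis
      unfolding \<phi>'_def using permutes_inv_eq[OF f] permutes_inv_eq[OF g] by auto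
  qed
  then show "is_aut G \<phi>'"
    unfolding is_aut_iff_permutes \<phi>'_def using permutes_inv[OF f] permutes_inv[OF g] by simp
qed

lemma deck_id: "(id, id) \<in> deck C p"
  unfolding deck_def is_aut_def by auto

lemma deck_comp:
  assumes "\<phi> \<in> deck C p" "\<chi> \<in> deck C p"
  shows "comp_pair \<phi> \<chi> \<in> deck C p"
  using assms is_aut_comp[of C \<phi> \<chi>] is_aut_vert[of C \<chi>] is_aut_dart[of C \<chi>]
  unfolding deck_def comp_pair_def by auto

lemma deck_inverse:
  assumes "\<phi> \<in> deck C p"
  obtains \<phi>' where "\<phi>' \<in> deck C p" "comp_pair \<phi>' \<phi> = (id, id)"
proof
  have aut: "is_aut C \<phi>" and pv: "\<forall>v\<in>gverts C. fst p (fst \<phi> v) = fst p v"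
    and pd: "\<forall>d\<in>gdarts C. snd p (snd \<phi> d) = snd p d"
    using assms unfolding deck_def by auto
  let ?\<phi>' = "(inv (fst \<phi>), inv (snd \<phi>))"
  note inverse = is_aut_inverse[OF aut]
  show "comp_pair ?\<phi>' \<phi> = (id, id)" by (fact inverse(2))
  have right_inv: "fst \<phi> (fst ?\<phi>' v) = v" "snd \<phi> (snd ?\<phi>' d) = d" for v d
    using inverse(3) unfolding comp_pair_def by (simp_all add: fun_eq_iff)
  have "fst p (fst ?\<phi>' v) = fst p v" if "v \<in> gverts C" for v
    using pv is_aut_vert[OF inverse(1) that] right_inv(1)[of v] by force
  moreover have "snd p (snd ?\<phi>' d) = snd p d" if "d \<in> gdarts C" for d
    using pd is_aut_dart[OF inverse(1) that] right_inv(2)[of d] by force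
  ultimately show "?\<phi>' \<in> deck C p" using inverse(1) unfolding deck_def by blast
qed

section \<open>Coverings\<close>

lemma is_normal_coveringD:
  assumes "is_normal_covering C G p"
  shows "wf_graph C" and "gconnected C" and "fst p ` gverts C = gverts G"
    and "x \<in> gverts C \<Longrightarrow> y \<in> gverts C \<Longrightarrow> fst p x = fst p y
           \<Longrightarrow> \<exists>\<phi>\<in>deck C p. fst \<phi> x = y"
  using assms unfolding is_normal_covering_def is_covering_def by auto

lemma covering_lifts_darts:
  assumes cov: "is_covering C G p"
  shows "gdarts G \<subseteq> snd p ` gdarts C"
proof
  fix e assume e: "e \<in> gdarts G"
  then have "gtail G e \<in> fst p ` gverts C"
    using cov unfolding is_covering_def wf_graph_def by blast
  then obtain x where x: "x \<in> gverts C" "gtail G e = fst p x" by blast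
  then have "snd p ` {d \<in> gdarts C. gtail C d = x} = {e \<in> gdarts G. gtail G e = fst p x}"
    using cov unfolding is_covering_def bij_betw_def by blast
  then show "e \<in> snd p ` gdarts C" using e x(2) by blast
qed

lemma subgraph_image_induced:
  assumes cov: "is_covering C G p" and X: "X \<subseteq> gverts C"
  shows "subgraph (image_graph G p (induced C X)) G"
proof -
  have wfC: "wf_graph C" and wfG: "wf_graph G" and pv: "fst p ` gverts C = gverts G"
    and hom: "\<forall>d\<in>gdarts C. snd p d \<in> gdarts G \<and> fst p (gtail C d) = gtail G (snd p d)
                            \<and> snd p (grev C d) = grev G (snd p d)"
    using cov unfolding is_covering_def by auto
  let ?D = "gdarts (induced C X)"
  have D: "d \<in> gdarts C" "gtail C d \<in> X" "grev C d \<in> ?D" if "d \<in> ?D" for d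
    using that wfC unfolding wf_graph_def by (auto simp: induced_def ghead_def)
  have "gtail G e \<in> fst p ` X \<and> grev G e \<in> snd p ` ?D \<and> grev G (grev G e) = e \<and> grev G e \<noteq> e"
    if e: "e \<in> snd p ` ?D" for e
  proof -
    obtain d where d: "d \<in> ?D" "e = snd p d" using e by blast
    then have "e \<in> gdarts G" "gtail G e = fst p (gtail C d)" "grev G e = snd p (grev C d)"
      using hom D(1) by auto
    then show ?thesis using D[OF d(1)] wfG unfolding wf_graph_def by blast
  qed
  then have "wf_graph (image_graph G p (induced C X))"
    unfolding wf_graph_def image_graph_def by (simp add: induced_def)
  then show ?thesis
    using X pv hom unfolding subgraph_def image_graph_def by (auto simp: induced_def)
qed

lemma induced_darts_aut_image:
  assumes aut: "is_aut C \<phi>" and wf: "wf_graph C" and X: "X \<subseteq> gverts C"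
  shows "gdarts (induced C (fst \<phi> ` X)) = snd \<phi> ` gdarts (induced C X)"
proof (intro set_eqI iffI)
  fix e assume "e \<in> gdarts (induced C (fst \<phi> ` X))"
  then have e: "e \<in> gdarts C" "gtail C e \<in> fst \<phi> ` X" "ghead C e \<in> fst \<phi> ` X"
    by (simp_all add: induced_def)
  have perm: "fst \<phi> permutes gverts C" "snd \<phi> permutes gdarts C"
    using aut unfolding is_aut_iff_permutes by auto
  define d where "d = inv (snd \<phi>) e"
  have "d \<in> gdarts C" and e_eq: "e = snd \<phi> d"
    unfolding d_def
    using e(1) permutes_in_image[OF permutes_inv[OF perm(2)]] permutes_inverses(1)[OF perm(2)]
    by auto
  then have "fst \<phi> (gtail C d) \<in> fst \<phi> ` X" "fst \<phi> (ghead C d) \<in> fst \<phi> ` X"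
    using e is_aut_tail[OF aut] is_aut_head[OF aut wf] by auto
  then have "gtail C d \<in> X" "ghead C d \<in> X"
    using inj_image_mem_iff[OF permutes_inj[OF perm(1)]] by blast+
  then show "e \<in> snd \<phi> ` gdarts (induced C X)"
    using \<open>d \<in> gdarts C\<close> e_eq by (auto simp: induced_def)
next
  fix e assume "e \<in> snd \<phi> ` gdarts (induced C X)"
  then obtain d where "d \<in> gdarts C" "gtail C d \<in> X" "ghead C d \<in> X" "e = snd \<phi> d"
    by (auto simp: induced_def)
  then show "e \<in> gdarts (induced C (fst \<phi> ` X))"
    using is_aut_dart[OF aut] is_aut_tail[OF aut, symmetric] is_aut_head[OF aut wf, symmetric]
    by (auto simp: induced_def)
qed

lemma image_graph_induced_deck:
  assumes \<phi>: "\<phi> \<in> deck C p" and wf: "wf_graph C" and X: "X \<subseteq> gverts C"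
  shows "image_graph G p (induced C (fst \<phi> ` X)) = image_graph G p (induced C X)"
proof -
  have aut: "is_aut C \<phi>" and pv: "\<forall>v\<in>gverts C. fst p (fst \<phi> v) = fst p v"
    and pd: "\<forall>d\<in>gdarts C. snd p (snd \<phi> d) = snd p d"
    using \<phi> unfolding deck_def by auto
  have "fst p ` fst \<phi> ` X = fst p ` X"
    using pv X by (force simp: image_image)
  moreover have "snd p ` snd \<phi> ` gdarts (induced C X) = snd p ` gdarts (induced C X)"
    using pd by (force simp: image_image induced_def)
  ultimately show ?thesis
    unfolding image_graph_def induced_darts_aut_image[OF aut wf X] by (simp add: induced_def)
qed

section \<open>Tree-decompositions\<close>

lemma gadj_iff: "(a, b) \<in> gadj G \<longleftrightarrow> (\<exists>d\<in>gdarts G. gtail G d = a \<and> ghead G d = b)"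
  unfolding gadj_def by blast

lemma gadj_induced_iff:
  "(a, b) \<in> gadj (induced G X) \<longleftrightarrow> a \<in> X \<and> b \<in> X \<and> (a, b) \<in> gadj G"
  unfolding gadj_iff by (auto simp: induced_def ghead_def)

lemma gadj_del_edge_iff:
  "(a, b) \<in> gadj (del_edge G e)
     \<longleftrightarrow> (\<exists>d\<in>gdarts G - {e, grev G e}. gtail G d = a \<and> ghead G d = b)"
  unfolding gadj_iff by (auto simp: del_edge_def ghead_def)

lemma tree_decompositionD:
  assumes "tree_decomposition C T V"
  shows "wf_graph T"
    and "t \<in> gverts T \<Longrightarrow> V t \<noteq> {}"
    and "t \<in> gverts T \<Longrightarrow> V t \<subseteq> gverts C"
    and "gverts C = (\<Union>t\<in>gverts T. V t)"
    and "gdarts C = (\<Union>t\<in>gverts T. gdarts (induced C (V t)))"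
    and "x \<in> gverts C \<Longrightarrow> gconnected (induced T {t \<in> gverts T. x \<in> V t})"
  using assms unfolding tree_decomposition_def is_tree_def by auto

lemma tree_decomposition_bag_path:
  assumes "tree_decomposition C T V" "a \<in> gverts T" "b \<in> gverts T" "x \<in> V a" "x \<in> V b"
  shows "(a, b) \<in> (gadj (induced T {t \<in> gverts T. x \<in> V t}))\<^sup>*"
proof -
  have "x \<in> gverts C" using tree_decompositionD(3)[OF assms(1,2)] assms(4) by blast
  then have "gconnected (induced T {t \<in> gverts T. x \<in> V t})"
    by (rule tree_decompositionD(6)[OF assms(1)])
  then show ?thesis using assms(2-) unfolding gconnected_def by (simp add: induced_def)
qed

lemma tree_decomposition_component_closed:
  assumes td: "tree_decomposition C T V" and d: "d \<in> gdarts T"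
    and disj: "V (gtail T d) \<inter> V (ghead T d) = {}"
    and a: "a \<in> gverts T" "(gtail T d, a) \<in> (gadj (del_edge T d))\<^sup>*" "x \<in> V a"
    and b: "b \<in> gverts T" "x \<in> V b"
  shows "(gtail T d, b) \<in> (gadj (del_edge T d))\<^sup>*"
  using tree_decomposition_bag_path[OF td a(1) b(1) a(3) b(2)]
proof (induction rule: rtrancl_induct)
  case base
  show ?case using a(2) .
next
  case (step c e)
  then have x: "x \<in> V c" "x \<in> V e" and "(c, e) \<in> gadj T"
    unfolding gadj_induced_iff by simp_all
  then obtain d' where d': "d' \<in> gdarts T" "gtail T d' = c" "ghead T d' = e"
    unfolding gadj_iff by blast
  note wf = tree_decompositionD(1)[OF td]
  consider "d' = d" | "d' = grev T d" | "d' \<in> gdarts T - {d, grev T d}" using d'(1) by blast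
  then show ?case
  proof cases
    case 1
    then show ?thesis using d' x disj by blast
  next
    case 2
    then have "e = gtail T d" using d'(3) d wf unfolding wf_graph_def ghead_def by simp
    then show ?thesis by simp
  next
    case 3
    then have "(c, e) \<in> gadj (del_edge T d)" using d' unfolding gadj_del_edge_iff by blast
    then show ?thesis using step.IH by simp
  qed
qed

lemma tree_decomposition_closed_nodes_cover:
  assumes td: "tree_decomposition C T V" and conn: "gconnected C"
    and K: "s \<in> K" "K \<subseteq> gverts T"
    and closed: "\<And>x a b. a \<in> K \<Longrightarrow> x \<in> V a \<Longrightarrow> b \<in> gverts T \<Longrightarrow> x \<in> V b \<Longrightarrow> b \<in> K"
  shows "gverts C \<subseteq> \<Union> (V ` K)"
proof
  fix y assume y: "y \<in> gverts C"
  obtain u where u: "u \<in> V s" using tree_decompositionD(2)[OF td] K by blast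
  then have "u \<in> gverts C" using tree_decompositionD(3)[OF td] K by blast
  then have "(u, y) \<in> (gadj C)\<^sup>*" using conn y unfolding gconnected_def by blast
  then show "y \<in> \<Union> (V ` K)"
  proof (induction rule: rtrancl_induct)
    case base
    show ?case using u K(1) by blast
  next
    case (step z w)
    then obtain e where e: "e \<in> gdarts C" "gtail C e = z" "ghead C e = w"
      unfolding gadj_iff by blast
    have "e \<in> (\<Union>t\<in>gverts T. gdarts (induced C (V t)))"
      using e(1) tree_decompositionD(5)[OF td] by blast
    then obtain t where t: "t \<in> gverts T" "z \<in> V t" "w \<in> V t"
      using e by (auto simp: induced_def)
    from step.IH obtain a where "a \<in> K" "z \<in> V a" by blast
    then have "t \<in> K" using closed t(1,2) by blast
    then show ?case using t(3) by blast
  qed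
qed

lemma regular_td_adjacent_bags_meet:
  assumes td: "tree_decomposition C T V" and reg: "regular_td C T V"
    and conn: "gconnected C" and d: "d \<in> gdarts T"
  shows "V (gtail T d) \<inter> V (ghead T d) \<noteq> {}"
proof
  assume disj: "V (gtail T d) \<inter> V (ghead T d) = {}"
  define K where "K = {s \<in> gverts T. (gtail T d, s) \<in> (gadj (del_edge T d))\<^sup>*}"
  have "gtail T d \<in> gverts T"
    using tree_decompositionD(1)[OF td] d unfolding wf_graph_def by blast
  then have tail: "gtail T d \<in> K" unfolding K_def by simp
  have "b \<in> K" if "a \<in> K" "x \<in> V a" "b \<in> gverts T" "x \<in> V b" for x a b
    using that tree_decomposition_component_closed[OF td d disj _ _ that(2-4)] unfolding K_def by simp
  moreover have "K \<subseteq> gverts T" unfolding K_def by simp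
  ultimately have "gverts C \<subseteq> \<Union> (V ` K)"
    using tree_decomposition_closed_nodes_cover[OF td conn tail] by blast
  moreover have "\<Union> (V ` K) \<subseteq> gverts C"
    using tree_decompositionD(3)[OF td] unfolding K_def by blast
  moreover have "sep_side T V d = \<Union> (V ` K)"
    unfolding sep_side_def K_def by (rule arg_cong[where f = Union]) blast
  moreover have "sep_side T V d \<noteq> gverts C"
    using reg d unfolding regular_td_def by blast
  ultimately show False by simp
qed

section \<open>The orbit graph\<close>

lemma
  assumes "canonical_via C T V Dk \<psi>" "\<phi> \<in> Dk"
  shows canonical_via_aut: "is_aut T (\<psi> \<phi>)"
    and canonical_via_bag: "t \<in> gverts T \<Longrightarrow> V (fst (\<psi> \<phi>) t) = fst \<phi> ` V t"
    and canonical_via_comp: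
      "\<chi> \<in> Dk \<Longrightarrow> fst (\<psi> (comp_pair \<phi> \<chi>)) = fst (\<psi> \<phi>) \<circ> fst (\<psi> \<chi>)"
  using assms unfolding canonical_via_def comp_pair_def by auto

lemma canonical_via_id:
  assumes can: "canonical_via C T V (deck C p) \<psi>"
  shows "fst (\<psi> (id, id)) = id"
proof -
  let ?f = "fst (\<psi> (id, id))"
  have "?f = ?f \<circ> ?f"
    using canonical_via_comp[OF can deck_id deck_id] by (simp add: comp_pair_def)
  moreover have "inj ?f"
    using canonical_via_aut[OF can deck_id] permutes_inj unfolding is_aut_iff_permutes by blast
  ultimately have "?f (?f x) = ?f x" for x by (metis comp_apply)
  with \<open>inj ?f\<close> show ?thesis by (simp add: fun_eq_iff inj_eq)
qed

lemma node_orbit_self: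
  assumes "canonical_via C T V (deck C p) \<psi>"
  shows "t \<in> node_orbit (deck C p) \<psi> t"
proof -
  have "t = fst (\<psi> (id, id)) t" using canonical_via_id[OF assms] by simp
  then show ?thesis using deck_id unfolding node_orbit_def by blast
qed

lemma node_orbit_act:
  assumes can: "canonical_via C T V (deck C p) \<psi>" and \<phi>: "\<phi> \<in> deck C p"
  shows "node_orbit (deck C p) \<psi> (fst (\<psi> \<phi>) t) = node_orbit (deck C p) \<psi> t"
proof (rule set_eqI)
  fix s
  have "s \<in> node_orbit (deck C p) \<psi> t"
    if "\<chi> \<in> deck C p" "s = fst (\<psi> \<chi>) (fst (\<psi> \<phi>) t)" for \<chi>
  proof -
    have "s = fst (\<psi> (comp_pair \<chi> \<phi>)) t"
      using that(2) canonical_via_comp[OF can that(1) \<phi>] by simp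
    then show ?thesis using deck_comp[OF that(1) \<phi>] unfolding node_orbit_def by blast
  qed
  moreover have "s \<in> node_orbit (deck C p) \<psi> (fst (\<psi> \<phi>) t)"
    if \<chi>: "\<chi> \<in> deck C p" "s = fst (\<psi> \<chi>) t" for \<chi>
  proof -
    obtain \<phi>' where \<phi>': "\<phi>' \<in> deck C p" "comp_pair \<phi>' \<phi> = (id, id)"
      using deck_inverse[OF \<phi>] .
    have "t = fst (\<psi> \<phi>') (fst (\<psi> \<phi>) t)"
      using canonical_via_comp[OF can \<phi>'(1) \<phi>] canonical_via_id[OF can] \<phi>'(2)
      by (metis comp_apply id_apply)
    then have "s = fst (\<psi> (comp_pair \<chi> \<phi>')) (fst (\<psi> \<phi>) t)"
      using \<chi> canonical_via_comp[OF can \<chi>(1) \<phi>'(1)] by simp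
    then show ?thesis using deck_comp[OF \<chi>(1) \<phi>'(1)] unfolding node_orbit_def by blast
  qed
  ultimately show
    "s \<in> node_orbit (deck C p) \<psi> (fst (\<psi> \<phi>) t) \<longleftrightarrow> s \<in> node_orbit (deck C p) \<psi> t"
    unfolding node_orbit_def by blast
qed

definition edge_orbit :: "(('v \<Rightarrow> 'v) \<times> ('d \<Rightarrow> 'd)) set
    \<Rightarrow> (('v \<Rightarrow> 'v) \<times> ('d \<Rightarrow> 'd) \<Rightarrow> ('t \<Rightarrow> 't) \<times> ('a \<Rightarrow> 'a)) \<Rightarrow> ('t,'a) dgraph \<Rightarrow> 'a
    \<Rightarrow> 'a set set" where
  "edge_orbit Dk \<psi> T d = {snd (\<psi> \<phi>) ` {d, grev T d} | \<phi>. \<phi> \<in> Dk}"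

lemma orbit_graph_simps:
  "uverts (orbit_graph T Dk \<psi>) = node_orbit Dk \<psi> ` gverts T"
  "uedges (orbit_graph T Dk \<psi>) = edge_orbit Dk \<psi> T ` gdarts T"
  "uends (orbit_graph T Dk \<psi>) E = {node_orbit Dk \<psi> (gtail T d) | d. d \<in> \<Union>E}"
  unfolding orbit_graph_def edge_orbit_def by (simp_all add: Setcompr_eq_image)

lemma uends_edge_orbit:
  assumes can: "canonical_via C T V (deck C p) \<psi>" and wf: "wf_graph T" and d: "d \<in> gdarts T"
  shows "uends (orbit_graph T (deck C p) \<psi>) (edge_orbit (deck C p) \<psi> T d)
           = {node_orbit (deck C p) \<psi> (gtail T d), node_orbit (deck C p) \<psi> (ghead T d)}"
proof -
  let ?Ob = "node_orbit (deck C p) \<psi>"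
  have "grev T d \<in> gdarts T" "ghead T d = gtail T (grev T d)"
    using wf d unfolding wf_graph_def ghead_def by auto
  then have "?Ob (gtail T (snd (\<psi> \<phi>) d)) = ?Ob (gtail T d)"
    "?Ob (gtail T (snd (\<psi> \<phi>) (grev T d))) = ?Ob (ghead T d)" if "\<phi> \<in> deck C p" for \<phi>
    using is_aut_tail[OF canonical_via_aut[OF can that]] node_orbit_act[OF can that] d by metis+
  note orbit_ends = this
  have edges: "\<Union>(edge_orbit (deck C p) \<psi> T d)
      = (\<Union>\<phi>\<in>deck C p. {snd (\<psi> \<phi>) d, snd (\<psi> \<phi>) (grev T d)})"
    unfolding edge_orbit_def by blast
  show ?thesis
  proof (intro equalityI subsetI)
    fix h assume "h \<in> uends (orbit_graph T (deck C p) \<psi>) (edge_orbit (deck C p) \<psi> T d)"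
    then obtain \<phi> e where \<phi>: "\<phi> \<in> deck C p"
      and "e \<in> {snd (\<psi> \<phi>) d, snd (\<psi> \<phi>) (grev T d)}" "h = ?Ob (gtail T e)"
      unfolding orbit_graph_simps edges by blast
    then show "h \<in> {?Ob (gtail T d), ?Ob (ghead T d)}" using orbit_ends[OF \<phi>] by auto
  next
    fix h assume h: "h \<in> {?Ob (gtail T d), ?Ob (ghead T d)}"
    have "snd (\<psi> (id, id)) d \<in> \<Union>(edge_orbit (deck C p) \<psi> T d)"
      "snd (\<psi> (id, id)) (grev T d) \<in> \<Union>(edge_orbit (deck C p) \<psi> T d)"
      unfolding edges using deck_id by blast+
    then show "h \<in> uends (orbit_graph T (deck C p) \<psi>) (edge_orbit (deck C p) \<psi> T d)"
      unfolding orbit_graph_simps using h orbit_ends[OF deck_id] by auto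
  qed
qed

definition uadj_on :: "('h,'f) ugraph \<Rightarrow> 'h set \<Rightarrow> ('h \<times> 'h) set" where
  "uadj_on H X = {(a, b). a \<in> X \<and> b \<in> X \<and> (\<exists>f\<in>uedges H. uends H f = {a, b})}"

lemma uconnected_on_iff:
  "uconnected_on H X \<longleftrightarrow>
     X \<noteq> {} \<and> X \<subseteq> uverts H \<and> (\<forall>x\<in>X. \<forall>y\<in>X. (x, y) \<in> (uadj_on H X)\<^sup>*)"
  unfolding uconnected_on_def uadj_on_def ..

lemma orbit_graph_path:
  assumes can: "canonical_via C T V (deck C p) \<psi>" and wf: "wf_graph T"
    and path: "(a, b) \<in> (gadj (induced T S))\<^sup>*"
    and S: "node_orbit (deck C p) \<psi> ` S \<subseteq> X"
  shows "(node_orbit (deck C p) \<psi> a, node_orbit (deck C p) \<psi> b)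
           \<in> (uadj_on (orbit_graph T (deck C p) \<psi>) X)\<^sup>*"
  using path
proof (induction rule: rtrancl_induct)
  case base
  show ?case by simp
next
  case (step c e)
  then have ce: "c \<in> S" "e \<in> S" and "(c, e) \<in> gadj T"
    unfolding gadj_induced_iff by simp_all
  then obtain d where d: "d \<in> gdarts T" "gtail T d = c" "ghead T d = e"
    unfolding gadj_iff by blast
  let ?Ob = "node_orbit (deck C p) \<psi>"
  have "edge_orbit (deck C p) \<psi> T d \<in> uedges (orbit_graph T (deck C p) \<psi>)"
    unfolding orbit_graph_simps using d(1) by blast
  moreover have "uends (orbit_graph T (deck C p) \<psi>) (edge_orbit (deck C p) \<psi> T d) = {?Ob c, ?Ob e}"
    using uends_edge_orbit[OF can wf d(1)] d(2,3) by simp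
  moreover have "?Ob c \<in> X" "?Ob e \<in> X" using ce S by blast+
  ultimately have "(?Ob c, ?Ob e) \<in> uadj_on (orbit_graph T (deck C p) \<psi>) X"
    unfolding uadj_on_def by blast
  with step.IH show ?case by (rule rtrancl_into_rtrancl)
qed

section \<open>The projected decomposition\<close>

lemma projected_parts_node_orbit:
  assumes can: "canonical_via C T V (deck C p) \<psi>" and wf: "wf_graph C"
    and td: "tree_decomposition C T V" and t: "t \<in> gverts T"
  shows "projected_parts C G p T V (node_orbit (deck C p) \<psi> t) = image_graph G p (induced C (V t))"
proof -
  let ?s = "SOME s. s \<in> node_orbit (deck C p) \<psi> t \<and> s \<in> gverts T"
  have "?s \<in> node_orbit (deck C p) \<psi> t"
    by (rule someI2[of _ t]) (use node_orbit_self[OF can] t in auto)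
  then obtain \<phi> where \<phi>: "\<phi> \<in> deck C p" "?s = fst (\<psi> \<phi>) t"
    unfolding node_orbit_def by blast
  from tree_decompositionD(3)[OF td t] show ?thesis
    unfolding projected_parts_def \<phi>(2) canonical_via_bag[OF can \<phi>(1) t]
    by (rule image_graph_induced_deck[OF \<phi>(1) wf])
qed

lemma projected_parts_node_orbit_verts:
  assumes can: "canonical_via C T V (deck C p) \<psi>" and wf: "wf_graph C"
    and td: "tree_decomposition C T V" and t: "t \<in> gverts T"
  shows "gverts (projected_parts C G p T V (node_orbit (deck C p) \<psi> t)) = fst p ` V t"
  unfolding projected_parts_node_orbit[OF assms] by (simp add: image_graph_def induced_def)

lemma UN_projected_parts:
  assumes can: "canonical_via C T V (deck C p) \<psi>" and wf: "wf_graph C"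
    and td: "tree_decomposition C T V"
  shows "(\<Union>h\<in>uverts (orbit_graph T (deck C p) \<psi>). F (projected_parts C G p T V h))
           = (\<Union>t\<in>gverts T. F (image_graph G p (induced C (V t))))"
  unfolding orbit_graph_simps using projected_parts_node_orbit[OF can wf td] by simp

lemma projected_parts_connected:
  assumes cov: "is_normal_covering C G p" and td: "tree_decomposition C T V"
    and can: "canonical_via C T V (deck C p) \<psi>" and v: "v \<in> gverts G"
  shows "uconnected_on (orbit_graph T (deck C p) \<psi>)
           {h \<in> uverts (orbit_graph T (deck C p) \<psi>). v \<in> gverts (projected_parts C G p T V h)}"
    (is "uconnected_on ?H ?X")
proof -
  let ?Ob = "node_orbit (deck C p) \<psi>"
  note wfC = is_normal_coveringD(1)[OF cov]
  have X: "?X = ?Ob ` {t \<in> gverts T. v \<in> fst p ` V t}"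
    using projected_parts_node_orbit_verts[OF can wfC td] unfolding orbit_graph_simps by auto
  have "v \<in> fst p ` (\<Union>t\<in>gverts T. V t)"
    using v is_normal_coveringD(3)[OF cov] tree_decompositionD(4)[OF td] by simp
  then obtain t x where "t \<in> gverts T" "x \<in> V t" "v = fst p x" by blast
  then have "?X \<noteq> {}" unfolding X by blast
  have path: "(?Ob t1, ?Ob t2) \<in> (uadj_on ?H ?X)\<^sup>*"
    if t1: "t1 \<in> gverts T" "x1 \<in> V t1" "fst p x1 = v"
    and t2: "t2 \<in> gverts T" "x2 \<in> V t2" "fst p x2 = v" for t1 t2 x1 x2
  proof -
    have "x1 \<in> gverts C" "x2 \<in> gverts C"
      using tree_decompositionD(3)[OF td] t1 t2 by blast+
    then obtain \<phi> where \<phi>: "\<phi> \<in> deck C p" "fst \<phi> x1 = x2"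
      using is_normal_coveringD(4)[OF cov] t1(3) t2(3) by metis
    let ?t1' = "fst (\<psi> \<phi>) t1"
    have t1': "?t1' \<in> gverts T" "x2 \<in> V ?t1'" "?Ob ?t1' = ?Ob t1"
      using is_aut_vert[OF canonical_via_aut[OF can \<phi>(1)] t1(1)]
        canonical_via_bag[OF can \<phi>(1) t1(1)] node_orbit_act[OF can \<phi>(1)] \<phi>(2) t1(2)
      by auto
    have "?Ob ` {t \<in> gverts T. x2 \<in> V t} \<subseteq> ?X"
      unfolding X using t2(3) by blast
    from orbit_graph_path[OF can tree_decompositionD(1)[OF td]
        tree_decomposition_bag_path[OF td t1'(1) t2(1) t1'(2) t2(2)] this]
    show ?thesis using t1' by simp
  qed
  show ?thesis unfolding uconnected_on_iff
  proof (intro conjI ballI)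
    fix h h' assume "h \<in> ?X" "h' \<in> ?X"
    then obtain t1 x1 t2 x2 where "t1 \<in> gverts T" "x1 \<in> V t1" "v = fst p x1" "h = ?Ob t1"
      and "t2 \<in> gverts T" "x2 \<in> V t2" "v = fst p x2" "h' = ?Ob t2"
      unfolding X by blast
    then show "(h, h') \<in> (uadj_on ?H ?X)\<^sup>*" using path[of t1 x1 t2 x2] by simp
  qed (fact \<open>?X \<noteq> {}\<close>, blast)
qed

lemma projected_parts_graph_decomposition:
  assumes cov: "is_normal_covering C G p" and td: "tree_decomposition C T V"
    and can: "canonical_via C T V (deck C p) \<psi>"
  shows "graph_decomposition G (orbit_graph T (deck C p) \<psi>) (projected_parts C G p T V)"
proof -
  note wfC = is_normal_coveringD(1)[OF cov]
  have covering: "is_covering C G p" using cov unfolding is_normal_covering_def by blast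
  have "subgraph (projected_parts C G p T V h) G" if "h \<in> uverts (orbit_graph T (deck C p) \<psi>)" for h
    using that projected_parts_node_orbit[OF can wfC td] subgraph_image_induced[OF covering]
      tree_decompositionD(3)[OF td] unfolding orbit_graph_simps by auto
  moreover have "(\<Union>t\<in>gverts T. gverts (image_graph G p (induced C (V t)))) = gverts G"
    using tree_decompositionD(4)[OF td] is_normal_coveringD(3)[OF cov]
    by (simp add: image_graph_def induced_def image_UN)
  moreover have "(\<Union>t\<in>gverts T. gdarts (image_graph G p (induced C (V t)))) = gdarts G"
  proof -
    have "(\<Union>t\<in>gverts T. gdarts (image_graph G p (induced C (V t))))
        = snd p ` (\<Union>t\<in>gverts T. gdarts (induced C (V t)))"
      by (simp add: image_graph_def image_UN)
    also have "\<dots> = snd p ` gdarts C" using tree_decompositionD(5)[OF td] by simp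
    also have "\<dots> = gdarts G"
      using covering_lifts_darts[OF covering] covering unfolding is_covering_def by blast
    finally show ?thesis .
  qed
  ultimately show ?thesis
    unfolding graph_decomposition_def UN_projected_parts[OF can wfC td]
    using projected_parts_connected[OF cov td can] by simp
qed

lemma projected_parts_adjacent_meet:
  assumes cov: "is_normal_covering C G p" and td: "tree_decomposition C T V"
    and reg: "regular_td C T V" and can: "canonical_via C T V (deck C p) \<psi>"
    and f: "f \<in> uedges (orbit_graph T (deck C p) \<psi>)"
    and ends: "uends (orbit_graph T (deck C p) \<psi>) f = {h, h'}"
  shows "gverts (projected_parts C G p T V h) \<inter> gverts (projected_parts C G p T V h') \<noteq> {}"
proof -
  let ?Ob = "node_orbit (deck C p) \<psi>"
  note wfT = tree_decompositionD(1)[OF td]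
  obtain d where d: "d \<in> gdarts T" "f = edge_orbit (deck C p) \<psi> T d"
    using f unfolding orbit_graph_simps by blast
  then have hh': "{h, h'} = {?Ob (gtail T d), ?Ob (ghead T d)}"
    using ends uends_edge_orbit[OF can wfT] by simp
  have ends_T: "gtail T d \<in> gverts T" "ghead T d \<in> gverts T"
    using wfT d(1) unfolding wf_graph_def ghead_def by auto
  obtain x where "x \<in> V (gtail T d)" "x \<in> V (ghead T d)"
    using regular_td_adjacent_bags_meet[OF td reg is_normal_coveringD(2)[OF cov] d(1)] by blast
  then have "fst p x \<in> gverts (projected_parts C G p T V (?Ob (gtail T d)))"
    "fst p x \<in> gverts (projected_parts C G p T V (?Ob (ghead T d)))"
    using projected_parts_node_orbit_verts[OF can is_normal_coveringD(1)[OF cov] td] ends_T by simp_all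
  moreover have "h \<in> {?Ob (gtail T d), ?Ob (ghead T d)}" "h' \<in> {?Ob (gtail T d), ?Ob (ghead T d)}"
    using hh' by blast+
  ultimately show ?thesis by blast
qed

theorem lemma3p9:
  fixes C :: "('v,'d) dgraph" and G :: "('w,'e) dgraph"
    and p :: "('v \<Rightarrow> 'w) \<times> ('d \<Rightarrow> 'e)"
    and T :: "('t,'a) dgraph" and V :: "'t \<Rightarrow> 'v set"
    and \<psi> :: "('v \<Rightarrow> 'v) \<times> ('d \<Rightarrow> 'd) \<Rightarrow> ('t \<Rightarrow> 't) \<times> ('a \<Rightarrow> 'a)"
  assumes "gconnected G"
    and "is_normal_covering C G p"
    and "tree_decomposition C T V"
    and "regular_td C T V"
    and "canonical_via C T V (deck C p) \<psi>"
  shows "honest G (orbit_graph T (deck C p) \<psi>) (projected_parts C G p T V)"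
  unfolding honest_def
proof (intro conjI ballI allI impI)
  show "graph_decomposition G (orbit_graph T (deck C p) \<psi>) (projected_parts C G p T V)"
    using assms(2,3,5) by (rule projected_parts_graph_decomposition)
next
  fix f h h'
  assume "f \<in> uedges (orbit_graph T (deck C p) \<psi>)"
    and "uends (orbit_graph T (deck C p) \<psi>) f = {h, h'}"
  then show "gverts (projected_parts C G p T V h) \<inter> gverts (projected_parts C G p T V h') \<noteq> {}"
    by (rule projected_parts_adjacent_meet[OF assms(2-5)])
qed

end
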